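(* With probability at least $1-\delta/4$, for all $1\le t\le T$ and all $\mathbf{x}\in\mathcal{X}$, \[ |\mu_{\mathrm{fb}[t]}(\mathbf{x})-\widetilde\mu_{\mathrm{fb}[t]}(\mathbf{x})|\le 2\hat K_0\frac{t^2(L+1)\varepsilon}{\sigma^4}\Big(B'+\sigma\sqrt{2\log(4T/\delta)}\Big). \]
   Context: $\mathcal{X}$ is a finite subset of the unit ball of $\mathbb{R}^d$; $f:\mathcal{X}\to\mathbb{R}$ with $|f(\mathbf{x})|\le B'$; observations $y_\tau=f(\mathbf{x}_\tau)+\zeta_\tau$ with $\zeta_\tau\sim\mathcal{N}(0,\sigma^2)$ i.i.d.; $\delta\in(0,1)$, $T$ is the horizon. $k$ is the exact NTK with $k\le K_0$, $\widetilde k(\mathbf{x},\mathbf{x}')=\langle\nabla_\theta f(\mathbf{x};\theta_0),\nabla_\theta f(\mathbf{x}';\theta_0)\rangle$ the empirical NTK of a network with $L+1$ layers; assume $|\widetilde k-k|\le(L+1)\varepsilon$ on $\mathcal{X}\times\mathcal{X}$, $(L+1)\varepsilon\le1$, $\sigma^2\le1$, $\hat K_0=\max\{1,K_0\}$. Queries are indexed sequentially and $\mathrm{fb}[t]\le t-1$ is the number of observed queries when $\mathbf{x}_t$ is chosen. $\mu_{\mathrm{fb}[t]}(\mathbf{x})=\mathbf{k}_t(\mathbf{x})^\top(\mathbf{K}_t+\sigma^2I)^{-1}\mathbf{y}_t$ with $\mathbf{k}_t(\mathbf{x})=(k(\mathbf{x},\mathbf{x}_\tau))_{\tau\le\mathrm{fb}[t]}$,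 $\mathbf{K}_t=(k(\mathbf{x}_\tau,\mathbf{x}_{\tau'}))_{\tau,\tau'\le\mathrm{fb}[t]}$, $\mathbf{y}_t=(y_\tau)_{\tau\le\mathrm{fb}[t]}$; $\widetilde\mu_{\mathrm{fb}[t]}$ is defined identically with $\widetilde k$. *)

theory Defs
  imports "HOL-Probability.Probability" "Jordan_Normal_Form.Gauss_Jordan_Elimination"
begin

text \<open>Gram matrix of the first n observed queries xs 1, ..., xs n (JNF indices are 0-based).\<close>
definition gram_mat :: "('a \<Rightarrow> 'a \<Rightarrow> real) \<Rightarrow> (nat \<Rightarrow> 'a) \<Rightarrow> nat \<Rightarrow> real mat" where
  "gram_mat k xs n = mat n n (\<lambda>(i, j). k (xs (Suc i)) (xs (Suc j)))"

definition kern_vec :: "('a \<Rightarrow> 'a \<Rightarrow> real) \<Rightarrow> (nat \<Rightarrow> 'a) \<Rightarrow> nat \<Rightarrow> 'a \<Rightarrow> real vec" where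
  "kern_vec k xs n x = vec n (\<lambda>i. k x (xs (Suc i)))"

definition obs_vec :: "(nat \<Rightarrow> real) \<Rightarrow> nat \<Rightarrow> real vec" where
  "obs_vec ys n = vec n (\<lambda>i. ys (Suc i))"

definition post_mean ::
  "('a \<Rightarrow> 'a \<Rightarrow> real) \<Rightarrow> real \<Rightarrow> (nat \<Rightarrow> 'a) \<Rightarrow> (nat \<Rightarrow> real) \<Rightarrow> nat \<Rightarrow> 'a \<Rightarrow> real" where
  "post_mean k \<sigma> xs ys n x =
     scalar_prod (kern_vec k xs n x)
       (mult_mat_vec (the (mat_inverse (gram_mat k xs n + smult_mat (\<sigma>\<^sup>2) (one_mat n)))) (obs_vec ys n))"

definition psd_kernel_on :: "'a set \<Rightarrow> ('a \<Rightarrow> 'a \<Rightarrow> real) \<Rightarrow> bool" where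
  "psd_kernel_on X k \<longleftrightarrow>
     (\<forall>x\<in>X. \<forall>x'\<in>X. k x x' = k x' x) \<and>
     (\<forall>n (xs :: nat \<Rightarrow> 'a) (c :: nat \<Rightarrow> real). (\<forall>i<n. xs i \<in> X) \<longrightarrow>
        0 \<le> (\<Sum>i<n. \<Sum>j<n. c i * c j * k (xs i) (xs j)))"

end

theory Submission
  imports Defs "Jordan_Normal_Form.Determinant"
begin

(* Both posterior means are kernel sums k_n(x)^T alpha, where alpha solves the regularised
   system (K_n + sigma^2 I) alpha = y_n.  Positive semidefiniteness of K_n gives
   ||alpha|| <= ||y_n|| / sigma^2, and subtracting the systems of the two kernels gives
   ||alpha - beta|| <= n e ||beta|| / sigma^2, where e = (L+1) epsilon bounds the entrywise kernel
   error.  With Cauchy-Schwarz the two means differ by at most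
   n e Y / sigma^2 + n^2 (K_0 + e) e Y / sigma^4 <= 2 max(1, K_0) t^2 e Y / sigma^4
   as long as the n < t observations are bounded by Y.  By the Gaussian tail bound and a union
   bound over the T noise variables, Y = B' + sigma sqrt(2 log(4T/delta)) works with probability
   at least 1 - delta/4. *)

unbundle no vec_syntax

lemma L2_set_le_sqrt_card_mult:
  assumes "\<forall>i\<in>A. \<bar>v i\<bar> \<le> c"
  shows "L2_set v A \<le> sqrt (real (card A)) * c"
proof (cases "A = {}")
  case False
  then have "0 \<le> c" using assms by (meson abs_ge_zero all_not_in_conv order_trans)
  have "L2_set v A = L2_set (\<lambda>i. \<bar>v i\<bar>) A" by (simp add: L2_set_def)
  also have "\<dots> \<le> L2_set (\<lambda>_. c) A" by (rule L2_set_mono) (use assms in auto)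
  also have "\<dots> = sqrt (real (card A)) * c" using \<open>0 \<le> c\<close> by (simp add: L2_set_constant)
  finally show ?thesis .
qed simp

lemma abs_sum_mult_le_L2_set: "\<bar>\<Sum>i\<in>A. u i * v i\<bar> \<le> L2_set u A * L2_set v A"
proof -
  have "\<bar>\<Sum>i\<in>A. u i * v i\<bar> \<le> (\<Sum>i\<in>A. \<bar>u i\<bar> * \<bar>v i\<bar>)"
    using sum_abs[of "\<lambda>i. u i * v i" A] by (simp add: abs_mult)
  also have "\<dots> \<le> L2_set u A * L2_set v A" by (rule L2_set_mult_ineq)
  finally show ?thesis .
qed

lemma L2_set_mat_vec_le:
  assumes "\<forall>i<n. \<forall>j<n. \<bar>D i j\<bar> \<le> e"
  shows "L2_set (\<lambda>i. \<Sum>j<n. D i j * v j) {..<n} \<le> real n * e * L2_set v {..<n}"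
proof -
  have row: "\<bar>\<Sum>j<n. D i j * v j\<bar> \<le> sqrt (real n) * e * L2_set v {..<n}" if "i < n" for i
  proof -
    have "\<bar>\<Sum>j<n. D i j * v j\<bar> \<le> L2_set (D i) {..<n} * L2_set v {..<n}"
      by (rule abs_sum_mult_le_L2_set)
    also have "\<dots> \<le> sqrt (real n) * e * L2_set v {..<n}"
      using L2_set_le_sqrt_card_mult[of "{..<n}" "D i" e] assms that
      by (intro mult_right_mono) (auto simp: L2_set_nonneg)
    finally show ?thesis .
  qed
  have "L2_set (\<lambda>i. \<Sum>j<n. D i j * v j) {..<n}
      \<le> sqrt (real n) * (sqrt (real n) * e * L2_set v {..<n})"
    using L2_set_le_sqrt_card_mult[of "{..<n}" _ "sqrt (real n) * e * L2_set v {..<n}"] row by simp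
  also have "\<dots> = real n * e * L2_set v {..<n}" by simp
  finally show ?thesis .
qed

lemma psd_kernel_onD:
  fixes n :: nat
  assumes "psd_kernel_on X k" and "\<forall>i<n. xs i \<in> X"
  shows "0 \<le> (\<Sum>i<n. \<Sum>j<n. c i * c j * k (xs i) (xs j))"
  using assms unfolding psd_kernel_on_def by blast

lemma psd_kernel_on_sym:
  assumes "psd_kernel_on X k" and "a \<in> X" and "b \<in> X"
  shows "k a b = k b a"
  using assms unfolding psd_kernel_on_def by blast

lemma psd_kernel_on_inner: "psd_kernel_on X (\<lambda>x y. inner (g x) (g y))"
proof -
  have "(\<Sum>i<n. \<Sum>j<n. c i * c j * inner (g (xs i)) (g (xs j)))
      = inner (\<Sum>i<n. c i *\<^sub>R g (xs i)) (\<Sum>j<n. c j *\<^sub>R g (xs j))"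
    for n :: nat and xs and c :: "nat \<Rightarrow> real"
    by (simp only: inner_sum_left inner_sum_right, subst sum.swap, simp add: ac_simps)
  then show ?thesis unfolding psd_kernel_on_def by (simp add: inner_commute)
qed

lemma psd_kernel_on_comp:
  assumes "psd_kernel_on X k" and "g ` A \<subseteq> X"
  shows "psd_kernel_on A (\<lambda>a b. k (g a) (g b))"
  unfolding psd_kernel_on_def
proof (intro conjI ballI allI impI)
  show "k (g a) (g b) = k (g b) (g a)" if "a \<in> A" "b \<in> A" for a b
    using psd_kernel_on_sym[OF assms(1)] that assms(2) by blast
  show "0 \<le> (\<Sum>i<n. \<Sum>j<n. c i * c j * k (g (xs i)) (g (xs j)))"
    if "\<forall>i<n. xs i \<in> A" for n :: nat and xs c
    using psd_kernel_onD[OF assms(1), of n "\<lambda>i. g (xs i)"] that assms(2) by blast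
qed

lemma psd_kernel_on_quadratic_form_nonneg:
  fixes n :: nat
  assumes "psd_kernel_on {..<n} K"
  shows "0 \<le> (\<Sum>i<n. \<Sum>j<n. c i * c j * K i j)"
  using psd_kernel_onD[OF assms, of n "\<lambda>i. i"] by simp

lemma psd_kernel_on_abs_le:
  assumes "psd_kernel_on X k" and "a \<in> X" and "b \<in> X"
  shows "2 * \<bar>k a b\<bar> \<le> k a a + k b b"
proof -
  define xs :: "nat \<Rightarrow> 'a" where "xs i = (if i = 0 then a else b)" for i
  have "\<forall>i<2. xs i \<in> X" using assms by (simp add: xs_def)
  from psd_kernel_onD[OF assms(1) this]
  have form: "0 \<le> c 0 * c 0 * k a a + c 0 * c 1 * k a b + c 1 * c 0 * k b a + c 1 * c 1 * k b b"
    for c :: "nat \<Rightarrow> real"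
    by (simp add: numeral_2_eq_2 xs_def add.assoc)
  have "0 \<le> k a a - 2 * k a b + k b b" "0 \<le> k a a + 2 * k a b + k b b"
    using form[of "\<lambda>i. if i = 0 then 1 else -1"] form[of "\<lambda>_. 1"] psd_kernel_on_sym[OF assms]
    by simp_all
  then show ?thesis by (simp add: abs_if)
qed

lemma psd_kernel_on_abs_le_diag_bound:
  assumes "psd_kernel_on X k" and "\<forall>x\<in>X. k x x \<le> K" and "a \<in> X" and "b \<in> X"
  shows "\<bar>k a b\<bar> \<le> K"
proof -
  have "k a a \<le> K" and "k b b \<le> K" using assms(2-4) by blast+
  then show ?thesis using psd_kernel_on_abs_le[OF assms(1,3,4)] by linarith
qed

lemma regularized_solution_L2_le:
  fixes n :: nat
  assumes psd: "psd_kernel_on {..<n} K"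
    and sol: "\<forall>i<n. (\<Sum>j<n. K i j * v j) + s * v i = w i" and "0 < s"
  shows "L2_set v {..<n} \<le> L2_set w {..<n} / s"
proof -
  let ?N = "\<lambda>u. L2_set u {..<n}"
  have "(\<Sum>i<n. v i * w i) = (\<Sum>i<n. v i * ((\<Sum>j<n. K i j * v j) + s * v i))"
    using sol by (intro sum.cong) auto
  also have "\<dots> = (\<Sum>i<n. \<Sum>j<n. v i * v j * K i j) + s * ?N v ^ 2"
    by (simp add: L2_set_def sum_nonneg power2_eq_square algebra_simps sum.distrib sum_distrib_left)
  finally have "s * ?N v ^ 2 \<le> (\<Sum>i<n. v i * w i)"
    using psd_kernel_on_quadratic_form_nonneg[OF psd, of v] by linarith
  also have "\<dots> \<le> ?N v * ?N w"
    using abs_sum_mult_le_L2_set[of v w "{..<n}"] by linarith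
  finally have "?N v * (s * ?N v) \<le> ?N v * ?N w" by (simp add: power2_eq_square ac_simps)
  then have "s * ?N v \<le> ?N w"
  proof (cases "?N v = 0")
    case False
    then have "0 < ?N v" using L2_set_nonneg[of v "{..<n}"] by linarith
    with \<open>?N v * (s * ?N v) \<le> ?N v * ?N w\<close> show ?thesis by simp
  qed simp
  then show ?thesis using \<open>0 < s\<close> by (simp add: field_simps)
qed

lemma regularized_solution_diff_L2_le:
  assumes psd: "psd_kernel_on {..<n} Ka"
    and sol_a: "\<forall>i<n. (\<Sum>j<n. Ka i j * \<alpha> j) + s * \<alpha> i = y i"
    and sol_b: "\<forall>i<n. (\<Sum>j<n. Kb i j * \<beta> j) + s * \<beta> i = y i"
    and close: "\<forall>i<n. \<forall>j<n. \<bar>Kb i j - Ka i j\<bar> \<le> e" and "0 < s"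
  shows "L2_set (\<lambda>i. \<alpha> i - \<beta> i) {..<n} \<le> real n * e * L2_set \<beta> {..<n} / s"
proof -
  have "(\<Sum>j<n. Ka i j * (\<alpha> j - \<beta> j)) + s * (\<alpha> i - \<beta> i)
      = ((\<Sum>j<n. Ka i j * \<alpha> j) + s * \<alpha> i) - ((\<Sum>j<n. Kb i j * \<beta> j) + s * \<beta> i)
        + (\<Sum>j<n. (Kb i j - Ka i j) * \<beta> j)" for i
    by (simp add: algebra_simps sum_subtractf)
  then have "\<forall>i<n. (\<Sum>j<n. Ka i j * (\<alpha> j - \<beta> j)) + s * (\<alpha> i - \<beta> i)
      = (\<Sum>j<n. (Kb i j - Ka i j) * \<beta> j)"
    using sol_a sol_b by simp
  then have "L2_set (\<lambda>i. \<alpha> i - \<beta> i) {..<n}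
      \<le> L2_set (\<lambda>i. \<Sum>j<n. (Kb i j - Ka i j) * \<beta> j) {..<n} / s"
    by (rule regularized_solution_L2_le[OF psd _ \<open>0 < s\<close>])
  also have "\<dots> \<le> real n * e * L2_set \<beta> {..<n} / s"
    using L2_set_mat_vec_le[OF close] \<open>0 < s\<close> by (simp add: divide_right_mono)
  finally show ?thesis .
qed

lemma kernel_regression_perturbation:
  assumes psd_a: "psd_kernel_on {..<n} Ka" and psd_b: "psd_kernel_on {..<n} Kb"
    and sol_a: "\<forall>i<n. (\<Sum>j<n. Ka i j * \<alpha> j) + s * \<alpha> i = y i"
    and sol_b: "\<forall>i<n. (\<Sum>j<n. Kb i j * \<beta> j) + s * \<beta> i = y i"
    and close_K: "\<forall>i<n. \<forall>j<n. \<bar>Kb i j - Ka i j\<bar> \<le> e"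
    and close_k: "\<forall>i<n. \<bar>kb i - ka i\<bar> \<le> e"
    and bounded_k: "\<forall>i<n. \<bar>ka i\<bar> \<le> K0"
    and bounded_y: "\<forall>i<n. \<bar>y i\<bar> \<le> Y"
    and "0 < s" and "0 \<le> e"
  shows "\<bar>(\<Sum>i<n. ka i * \<alpha> i) - (\<Sum>i<n. kb i * \<beta> i)\<bar>
           \<le> real n * e * Y / s + real n ^ 2 * (K0 + e) * e * Y / s\<^sup>2"
proof -
  let ?N = "\<lambda>u. L2_set u {..<n}" and ?r = "sqrt (real n)"
  have "?N y \<le> ?r * Y"
    using L2_set_le_sqrt_card_mult[of "{..<n}" y Y] bounded_y by simp
  then have norm_a: "?N \<alpha> \<le> ?r * Y / s" and norm_b: "?N \<beta> \<le> ?r * Y / s"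
    using regularized_solution_L2_le[OF psd_a sol_a \<open>0 < s\<close>]
      regularized_solution_L2_le[OF psd_b sol_b \<open>0 < s\<close>] \<open>0 < s\<close>
    by (smt (verit) divide_right_mono)+
  have norm_diff: "?N (\<lambda>i. \<alpha> i - \<beta> i) \<le> real n * e * (?r * Y / s) / s"
    using regularized_solution_diff_L2_le[OF psd_a sol_a sol_b close_K \<open>0 < s\<close>] norm_b
      \<open>0 < s\<close> \<open>0 \<le> e\<close>
    by (smt (verit) divide_right_mono mult_left_mono of_nat_0_le_iff zero_le_mult_iff)
  have norm_dk: "?N (\<lambda>i. ka i - kb i) \<le> ?r * e"
    using L2_set_le_sqrt_card_mult[of "{..<n}" "\<lambda>i. ka i - kb i" e] close_k
    by (simp add: abs_minus_commute)
  have norm_kb: "?N kb \<le> ?r * (K0 + e)"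
  proof -
    have "\<bar>kb i\<bar> \<le> K0 + e" if "i < n" for i
      using close_k bounded_k that by (smt (verit))
    then show ?thesis using L2_set_le_sqrt_card_mult[of "{..<n}" kb "K0 + e"] by simp
  qed
  have "(\<Sum>i<n. ka i * \<alpha> i) - (\<Sum>i<n. kb i * \<beta> i)
      = (\<Sum>i<n. (ka i - kb i) * \<alpha> i) + (\<Sum>i<n. kb i * (\<alpha> i - \<beta> i))"
    by (simp add: algebra_simps sum_subtractf)
  then have "\<bar>(\<Sum>i<n. ka i * \<alpha> i) - (\<Sum>i<n. kb i * \<beta> i)\<bar>
      \<le> ?N (\<lambda>i. ka i - kb i) * ?N \<alpha> + ?N kb * ?N (\<lambda>i. \<alpha> i - \<beta> i)"
    using abs_sum_mult_le_L2_set[of "\<lambda>i. ka i - kb i" \<alpha> "{..<n}"]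
      abs_sum_mult_le_L2_set[of kb "\<lambda>i. \<alpha> i - \<beta> i" "{..<n}"]
    by (smt (verit) abs_triangle_ineq)
  also have "\<dots> \<le> (?r * e) * (?r * Y / s) + (?r * (K0 + e)) * (real n * e * (?r * Y / s) / s)"
    by (intro add_mono mult_mono' norm_dk norm_a norm_kb norm_diff L2_set_nonneg)
  also have "\<dots> = real n * e * Y / s + real n ^ 2 * (K0 + e) * e * Y / s\<^sup>2"
    by (simp add: power2_eq_square field_simps)
  finally show ?thesis .
qed

lemma kernel_regression_bound_quadratic:
  fixes n t :: nat
  assumes "n < t" and "0 < s" "s \<le> 1" and "0 \<le> e" "e \<le> 1" and "0 \<le> Y"
  shows "real n * e * Y / s + real n ^ 2 * (K0 + e) * e * Y / s\<^sup>2
           \<le> 2 * max 1 K0 * (real t ^ 2 * e / s\<^sup>2) * Y"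
proof -
  let ?H = "max 1 K0"
  have "real n * s \<le> real n" using \<open>s \<le> 1\<close> by (simp add: mult_left_le)
  moreover have "real n ^ 2 * (K0 + e) \<le> real n ^ 2 * (2 * ?H)"
    using \<open>e \<le> 1\<close> by (intro mult_left_mono) auto
  moreover have "real n \<le> 2 * ?H * (2 * real n + 1)"
  proof -
    have "real n \<le> 2 * 1 * (2 * real n + 1)" by simp
    also have "\<dots> \<le> 2 * ?H * (2 * real n + 1)" by (intro mult_right_mono mult_left_mono) auto
    finally show ?thesis .
  qed
  moreover have "2 * ?H * (real n + 1) ^ 2 \<le> 2 * ?H * real t ^ 2"
    using \<open>n < t\<close> by (intro mult_left_mono power_mono) auto
  ultimately have poly: "real n * s + real n ^ 2 * (K0 + e) \<le> 2 * ?H * real t ^ 2"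
    by (simp add: power2_eq_square algebra_simps)
  have "real n * e * Y / s + real n ^ 2 * (K0 + e) * e * Y / s\<^sup>2
      = (real n * s + real n ^ 2 * (K0 + e)) * (e * Y / s\<^sup>2)"
    using \<open>0 < s\<close> by (simp add: field_simps power2_eq_square)
  also have "\<dots> \<le> 2 * ?H * real t ^ 2 * (e * Y / s\<^sup>2)"
    using poly \<open>0 \<le> e\<close> \<open>0 \<le> Y\<close> by (intro mult_right_mono) auto
  finally show ?thesis by simp
qed

lemma regularized_gram_mat_mult_vec_nth:
  assumes "i < n" and "v \<in> carrier_vec n"
  shows "((gram_mat k xs n + smult_mat (\<sigma>\<^sup>2) (one_mat n)) *\<^sub>v v) $ i
           = (\<Sum>j<n. k (xs (Suc i)) (xs (Suc j)) * v $ j) + \<sigma>\<^sup>2 * v $ i"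
proof -
  have "((gram_mat k xs n + smult_mat (\<sigma>\<^sup>2) (one_mat n)) *\<^sub>v v) $ i
      = (\<Sum>j<n. k (xs (Suc i)) (xs (Suc j)) * v $ j + (if j = i then \<sigma>\<^sup>2 * v $ i else 0))"
    using assms
    by (auto simp: gram_mat_def scalar_prod_def atLeast0LessThan distrib_right intro!: sum.cong)
  also have "\<dots> = (\<Sum>j<n. k (xs (Suc i)) (xs (Suc j)) * v $ j) + \<sigma>\<^sup>2 * v $ i"
    using assms(1) by (simp add: sum.distrib)
  finally show ?thesis .
qed

lemma regularized_gram_mat_inverse:
  assumes psd: "psd_kernel_on {..<n} (\<lambda>i j. k (xs (Suc i)) (xs (Suc j)))" and "0 < \<sigma>"
  obtains B where "mat_inverse (gram_mat k xs n + smult_mat (\<sigma>\<^sup>2) (one_mat n)) = Some B"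
    and "(gram_mat k xs n + smult_mat (\<sigma>\<^sup>2) (one_mat n)) * B = 1\<^sub>m n" and "B \<in> carrier_mat n n"
proof -
  define A where "A = gram_mat k xs n + smult_mat (\<sigma>\<^sup>2) (one_mat n)"
  have A: "A \<in> carrier_mat n n" by (simp add: A_def gram_mat_def)
  have kernel_trivial: "v = 0\<^sub>v n" if v: "v \<in> carrier_vec n" "A *\<^sub>v v = 0\<^sub>v n" for v
  proof -
    have "\<forall>i<n. (\<Sum>j<n. k (xs (Suc i)) (xs (Suc j)) * v $ j) + \<sigma>\<^sup>2 * v $ i = 0"
      using v regularized_gram_mat_mult_vec_nth[of _ n v k xs \<sigma>] unfolding A_def
      by (metis index_zero_vec(1))
    then have "L2_set (\<lambda>i. v $ i) {..<n} \<le> L2_set (\<lambda>_. 0) {..<n} / \<sigma>\<^sup>2"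
      using regularized_solution_L2_le[OF psd, of "\<lambda>i. v $ i" "\<sigma>\<^sup>2" "\<lambda>_. 0"] \<open>0 < \<sigma>\<close> by simp
    then have "L2_set (\<lambda>i. v $ i) {..<n} = 0"
      by (simp add: L2_set_constant) (meson L2_set_nonneg order.antisym)
    then show ?thesis using v(1) by (intro eq_vecI) (auto simp: L2_set_eq_0_iff)
  qed
  have "det A \<noteq> 0" using kernel_trivial det_0_iff_vec_prod_zero_field[OF A] by blast
  then have "A \<in> Units (ring_mat TYPE(real) n ())" by (rule det_non_zero_imp_unit[OF A])
  then have "mat_inverse A \<noteq> None" using mat_inverse(1)[OF A, where b = "()"] by blast
  then obtain B where "mat_inverse A = Some B" by blast
  with mat_inverse(2)[OF A this] that show ?thesis unfolding A_def by blast
qed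

lemma post_mean_eq_kernel_sum:
  assumes "psd_kernel_on {..<n} (\<lambda>i j. k (xs (Suc i)) (xs (Suc j)))" and "0 < \<sigma>"
  obtains \<alpha> where "\<forall>i<n. (\<Sum>j<n. k (xs (Suc i)) (xs (Suc j)) * \<alpha> j) + \<sigma>\<^sup>2 * \<alpha> i = ys (Suc i)"
    and "\<And>x. post_mean k \<sigma> xs ys n x = (\<Sum>i<n. k x (xs (Suc i)) * \<alpha> i)"
proof -
  let ?A = "gram_mat k xs n + smult_mat (\<sigma>\<^sup>2) (one_mat n)"
  obtain B where inv: "mat_inverse ?A = Some B" and AB: "?A * B = 1\<^sub>m n" and B: "B \<in> carrier_mat n n"
    using regularized_gram_mat_inverse[where k = k and xs = xs, OF assms] .
  define a where "a = B *\<^sub>v obs_vec ys n"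
  have y: "obs_vec ys n \<in> carrier_vec n" by (simp add: obs_vec_def)
  have a: "a \<in> carrier_vec n" using B y by (simp add: a_def)
  have A: "?A \<in> carrier_mat n n" by (simp add: gram_mat_def)
  have "?A *\<^sub>v a = (?A * B) *\<^sub>v obs_vec ys n"
    unfolding a_def using assoc_mult_mat_vec[OF A B y] by simp
  then have Aa: "?A *\<^sub>v a = obs_vec ys n" using AB y by simp
  show ?thesis
  proof
    show "\<forall>i<n. (\<Sum>j<n. k (xs (Suc i)) (xs (Suc j)) * a $ j) + \<sigma>\<^sup>2 * a $ i = ys (Suc i)"
      using regularized_gram_mat_mult_vec_nth[OF _ a, of _ k xs \<sigma>] Aa by (simp add: obs_vec_def)
    show "post_mean k \<sigma> xs ys n x = (\<Sum>i<n. k x (xs (Suc i)) * a $ i)" for x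
      using a by (simp add: post_mean_def inv a_def[symmetric] scalar_prod_def kern_vec_def
          atLeast0LessThan)
  qed
qed

lemma post_mean_kernel_perturbation:
  assumes psd_1: "psd_kernel_on X k\<^sub>1" and psd_2: "psd_kernel_on X k\<^sub>2"
    and close: "\<forall>x\<in>X. \<forall>x'\<in>X. \<bar>k\<^sub>2 x x' - k\<^sub>1 x x'\<bar> \<le> e" and "e \<le> 1"
    and bounded: "\<forall>x\<in>X. \<forall>x'\<in>X. k\<^sub>1 x x' \<le> K\<^sub>0"
    and points: "\<forall>i<n. xs (Suc i) \<in> X" and "x \<in> X"
    and observations: "\<forall>i<n. \<bar>ys (Suc i)\<bar> \<le> Y" and "0 \<le> Y"
    and "0 < \<sigma>" and "\<sigma>\<^sup>2 \<le> 1" and "n < t"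
  shows "\<bar>post_mean k\<^sub>1 \<sigma> xs ys n x - post_mean k\<^sub>2 \<sigma> xs ys n x\<bar>
           \<le> 2 * max 1 K\<^sub>0 * (real t ^ 2 * e / \<sigma> ^ 4) * Y"
proof -
  have "(\<lambda>i. xs (Suc i)) ` {..<n} \<subseteq> X" using points by auto
  note gram_1 = psd_kernel_on_comp[OF psd_1 this] and gram_2 = psd_kernel_on_comp[OF psd_2 this]
  obtain \<alpha> where sol_1: "\<forall>i<n. (\<Sum>j<n. k\<^sub>1 (xs (Suc i)) (xs (Suc j)) * \<alpha> j) + \<sigma>\<^sup>2 * \<alpha> i = ys (Suc i)"
    and mean_1: "\<And>x. post_mean k\<^sub>1 \<sigma> xs ys n x = (\<Sum>i<n. k\<^sub>1 x (xs (Suc i)) * \<alpha> i)"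
    using post_mean_eq_kernel_sum[where k = "k\<^sub>1" and xs = xs and ys = ys, OF gram_1 \<open>0 < \<sigma>\<close>]
    by blast
  obtain \<beta> where sol_2: "\<forall>i<n. (\<Sum>j<n. k\<^sub>2 (xs (Suc i)) (xs (Suc j)) * \<beta> j) + \<sigma>\<^sup>2 * \<beta> i = ys (Suc i)"
    and mean_2: "\<And>x. post_mean k\<^sub>2 \<sigma> xs ys n x = (\<Sum>i<n. k\<^sub>2 x (xs (Suc i)) * \<beta> i)"
    using post_mean_eq_kernel_sum[where k = "k\<^sub>2" and xs = xs and ys = ys, OF gram_2 \<open>0 < \<sigma>\<close>]
    by blast
  have "0 \<le> e" using close \<open>x \<in> X\<close> by (meson abs_ge_zero order_trans)
  have bounded_x: "\<forall>i<n. \<bar>k\<^sub>1 x (xs (Suc i))\<bar> \<le> K\<^sub>0"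
    using psd_kernel_on_abs_le_diag_bound[OF psd_1 _ \<open>x \<in> X\<close>] bounded points by blast
  have close_gram: "\<forall>i<n. \<forall>j<n. \<bar>k\<^sub>2 (xs (Suc i)) (xs (Suc j)) - k\<^sub>1 (xs (Suc i)) (xs (Suc j))\<bar> \<le> e"
    and close_x: "\<forall>i<n. \<bar>k\<^sub>2 x (xs (Suc i)) - k\<^sub>1 x (xs (Suc i))\<bar> \<le> e"
    using close points \<open>x \<in> X\<close> by blast+
  have "\<bar>post_mean k\<^sub>1 \<sigma> xs ys n x - post_mean k\<^sub>2 \<sigma> xs ys n x\<bar>
      \<le> real n * e * Y / \<sigma>\<^sup>2 + real n ^ 2 * (K\<^sub>0 + e) * e * Y / (\<sigma>\<^sup>2)\<^sup>2"
    unfolding mean_1 mean_2 using \<open>0 < \<sigma>\<close> \<open>0 \<le> e\<close>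
    by (intro kernel_regression_perturbation[OF gram_1 gram_2 sol_1 sol_2 close_gram close_x
          bounded_x observations]) simp_all
  also have "\<dots> \<le> 2 * max 1 K\<^sub>0 * (real t ^ 2 * e / (\<sigma>\<^sup>2)\<^sup>2) * Y"
    using \<open>n < t\<close> \<open>0 < \<sigma>\<close> \<open>\<sigma>\<^sup>2 \<le> 1\<close> \<open>0 \<le> e\<close> \<open>e \<le> 1\<close> \<open>0 \<le> Y\<close>
    by (intro kernel_regression_bound_quadratic) simp_all
  also have "(\<sigma>\<^sup>2)\<^sup>2 = \<sigma> ^ 4" by (simp only: power_mult[symmetric]) simp
  finally show ?thesis .
qed

lemma normal_density_has_real_derivative:
  assumes "\<sigma> \<noteq> 0"
  shows "(normal_density 0 \<sigma> has_real_derivative - x / \<sigma>\<^sup>2 * normal_density 0 \<sigma> x) (at x)"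
proof -
  define C where "C = 1 / sqrt (2 * pi * \<sigma>\<^sup>2)"
  have density: "normal_density 0 \<sigma> = (\<lambda>x. C * exp (- (x\<^sup>2 / (2 * \<sigma>\<^sup>2))))"
    by (simp add: normal_density_def C_def fun_eq_iff)
  have "((\<lambda>x. C * exp (- (x\<^sup>2 / (2 * \<sigma>\<^sup>2)))) has_real_derivative
      - x / \<sigma>\<^sup>2 * (C * exp (- (x\<^sup>2 / (2 * \<sigma>\<^sup>2))))) (at x)"
    using assms by (auto intro!: derivative_eq_intros simp: field_simps)
  then show ?thesis unfolding density .
qed

lemma normal_density_tendsto_0_at_top:
  assumes "0 < \<sigma>"
  shows "(normal_density 0 \<sigma> \<longlongrightarrow> 0) at_top"
proof -
  have "filterlim (\<lambda>x::real. x\<^sup>2 * (1 / (2 * \<sigma>\<^sup>2))) at_top at_top"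
    by (rule filterlim_at_top_mult_tendsto_pos[OF tendsto_const])
       (use assms in \<open>auto intro!: filterlim_pow_at_top filterlim_ident\<close>)
  then have "((\<lambda>x::real. exp (- (x\<^sup>2 * (1 / (2 * \<sigma>\<^sup>2))))) \<longlongrightarrow> 0) at_top"
    by (rule filterlim_compose[OF exp_at_bot filterlim_compose[OF filterlim_uminus_at_bot_at_top]])
  then have "((\<lambda>x. 1 / sqrt (2 * pi * \<sigma>\<^sup>2) * exp (- (x\<^sup>2 * (1 / (2 * \<sigma>\<^sup>2))))) \<longlongrightarrow> 0) at_top"
    by (rule tendsto_mult_right_zero)
  then show ?thesis by (simp add: normal_density_def[abs_def])
qed

lemma nn_integral_normal_tail_moment:
  assumes "0 < \<sigma>" and "0 \<le> c"
  shows "(\<integral>\<^sup>+x. ennreal (x * normal_density 0 \<sigma> x) * indicator {c..} x \<partial>lborel)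
           = ennreal (\<sigma>\<^sup>2 * normal_density 0 \<sigma> c)"
proof -
  have "(\<integral>\<^sup>+x. ennreal (x * normal_density 0 \<sigma> x) * indicator {c..} x \<partial>lborel)
      = ennreal (0 - (- \<sigma>\<^sup>2 * normal_density 0 \<sigma> c))"
  proof (rule nn_integral_FTC_atLeast)
    show "(\<lambda>x. x * normal_density 0 \<sigma> x) \<in> borel_measurable borel" by measurable
    show "((\<lambda>x. - \<sigma>\<^sup>2 * normal_density 0 \<sigma> x) has_real_derivative x * normal_density 0 \<sigma> x) (at x)"
      for x
      using DERIV_cmult[OF normal_density_has_real_derivative[of \<sigma> x], of "- \<sigma>\<^sup>2"] assms by simp
    show "0 \<le> x * normal_density 0 \<sigma> x" if "c \<le> x" for x
      using that assms by simp
    show "((\<lambda>x. - \<sigma>\<^sup>2 * normal_density 0 \<sigma> x) \<longlongrightarrow> 0) at_top"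
      by (intro tendsto_mult_right_zero normal_density_tendsto_0_at_top assms(1))
  qed
  then show ?thesis by simp
qed

(* Mills' ratio: on [c, \<infinity>) the density is at most x / c times itself. *)
lemma normal_upper_tail_le:
  assumes "prob_space M" and normal: "distributed M lborel Z (normal_density 0 \<sigma>)"
    and "0 < \<sigma>" and "0 < c"
  shows "measure M {\<omega>\<in>space M. c \<le> Z \<omega>} \<le> \<sigma>\<^sup>2 / c * normal_density 0 \<sigma> c"
proof -
  interpret prob_space M by fact
  have "Z -` {c..} \<inter> space M = {\<omega>\<in>space M. c \<le> Z \<omega>}" by auto
  then have "emeasure M {\<omega>\<in>space M. c \<le> Z \<omega>}
      = (\<integral>\<^sup>+x. ennreal (normal_density 0 \<sigma> x) * indicator {c..} x \<partial>lborel)"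
    using distributed_emeasure[OF normal, of "{c..}"] by simp
  also have "\<dots> \<le> (\<integral>\<^sup>+x. ennreal (1 / c) * (ennreal (x * normal_density 0 \<sigma> x) * indicator {c..} x)
      \<partial>lborel)"
  proof (rule nn_integral_mono)
    fix x :: real
    have "normal_density 0 \<sigma> x \<le> 1 / c * (x * normal_density 0 \<sigma> x)" if "c \<le> x"
      using that \<open>0 < c\<close> mult_right_mono[OF that normal_density_nonneg] by (simp add: field_simps)
    then show "ennreal (normal_density 0 \<sigma> x) * indicator {c..} x
        \<le> ennreal (1 / c) * (ennreal (x * normal_density 0 \<sigma> x) * indicator {c..} x)"
      using \<open>0 < c\<close> by (auto simp: indicator_def ennreal_mult[symmetric] intro: ennreal_leI)
  qed
  also have "\<dots> = ennreal (1 / c) * ennreal (\<sigma>\<^sup>2 * normal_density 0 \<sigma> c)"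
    using nn_integral_normal_tail_moment assms(3,4) by (subst nn_integral_cmult) auto
  also have "\<dots> = ennreal (\<sigma>\<^sup>2 / c * normal_density 0 \<sigma> c)"
    using \<open>0 < c\<close> by (simp add: ennreal_mult[symmetric])
  finally show ?thesis using \<open>0 < c\<close> by (simp add: emeasure_eq_measure ennreal_le_iff)
qed

lemma normal_abs_tail_le:
  assumes "prob_space M" and normal: "distributed M lborel Z (normal_density 0 \<sigma>)"
    and "0 < \<sigma>" and "0 < c"
  shows "measure M {\<omega>\<in>space M. c < \<bar>Z \<omega>\<bar>} \<le> 2 * (\<sigma>\<^sup>2 / c * normal_density 0 \<sigma> c)"
proof -
  interpret prob_space M by fact
  have [measurable]: "Z \<in> borel_measurable M" using distributed_measurable[OF normal] by simp
  have "distributed M lborel (\<lambda>\<omega>. - Z \<omega>) (normal_density 0 \<sigma>)"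
    using normal_density_affine[OF normal \<open>0 < \<sigma>\<close>, where \<alpha> = "-1" and \<beta> = 0] by simp
  note tails = normal_upper_tail_le[OF \<open>prob_space M\<close> normal \<open>0 < \<sigma>\<close> \<open>0 < c\<close>]
    normal_upper_tail_le[OF \<open>prob_space M\<close> this \<open>0 < \<sigma>\<close> \<open>0 < c\<close>]
  have "measure M {\<omega>\<in>space M. c < \<bar>Z \<omega>\<bar>}
      \<le> measure M ({\<omega>\<in>space M. c \<le> Z \<omega>} \<union> {\<omega>\<in>space M. c \<le> - Z \<omega>})"
    by (intro finite_measure_mono) auto
  also have "\<dots> \<le> measure M {\<omega>\<in>space M. c \<le> Z \<omega>} + measure M {\<omega>\<in>space M. c \<le> - Z \<omega>}"
    by (intro measure_Un_le) measurable
  finally show ?thesis using tails by linarith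
qed

lemma normal_abs_tail_sqrt_ln_le:
  assumes "prob_space M" and normal: "distributed M lborel Z (normal_density 0 \<sigma>)"
    and "0 < \<sigma>" and "exp 1 \<le> q"
  shows "measure M {\<omega>\<in>space M. \<sigma> * sqrt (2 * ln q) < \<bar>Z \<omega>\<bar>} \<le> 1 / q"
proof -
  define u where "u = sqrt (2 * ln q)"
  have "0 < q" using \<open>exp 1 \<le> q\<close> by (meson exp_gt_zero order_less_le_trans)
  then have "1 \<le> ln q" using \<open>exp 1 \<le> q\<close> by (simp add: ln_ge_iff)
  then have "sqrt 2 \<le> u" and "0 \<le> u" and u_sq: "u\<^sup>2 = 2 * ln q" by (simp_all add: u_def)
  have "2 = sqrt 2 * sqrt 2" by simp
  also have "\<dots> \<le> u * sqrt (2 * pi)"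
    using \<open>sqrt 2 \<le> u\<close> \<open>0 \<le> u\<close> pi_gt3 by (intro mult_mono) auto
  finally have u_large: "2 \<le> u * sqrt (2 * pi)" .
  have "exp (- (\<sigma> * u)\<^sup>2 / (2 * \<sigma>\<^sup>2)) = exp (- ln q)"
    using \<open>0 < \<sigma>\<close> u_sq by (simp add: power_mult_distrib)
  then have "normal_density 0 \<sigma> (\<sigma> * u) = 1 / (sqrt (2 * pi) * \<sigma>) * (1 / q)"
    using \<open>0 < \<sigma>\<close> \<open>0 < q\<close>
    by (simp add: normal_density_def real_sqrt_mult exp_minus inverse_eq_divide)
  then have "2 * (\<sigma>\<^sup>2 / (\<sigma> * u) * normal_density 0 \<sigma> (\<sigma> * u)) = 2 / (u * sqrt (2 * pi)) * (1 / q)"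
    using \<open>0 < \<sigma>\<close> by (simp add: field_simps power2_eq_square)
  also have "\<dots> \<le> 1 / q"
    using u_large \<open>0 < q\<close> by (simp add: field_simps)
  finally show ?thesis
    using normal_abs_tail_le[OF assms(1-3), of "\<sigma> * u"] \<open>0 < \<sigma>\<close> \<open>sqrt 2 \<le> u\<close>
    unfolding u_def by (smt (verit) mult_pos_pos real_sqrt_gt_zero)
qed

lemma normal_noise_bounded_whp:
  assumes "prob_space M"
    and normal: "\<forall>\<tau>\<in>{1..T}. distributed M lborel (\<zeta> \<tau>) (normal_density 0 \<sigma>)"
    and "0 < \<sigma>" and "0 < p" and "p \<le> 1 / 3"
  shows "{\<omega>\<in>space M. \<forall>\<tau>\<in>{1..T}. \<bar>\<zeta> \<tau> \<omega>\<bar> \<le> \<sigma> * sqrt (2 * ln (real T / p))} \<in> sets M"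
    and "1 - p \<le> measure M {\<omega>\<in>space M. \<forall>\<tau>\<in>{1..T}. \<bar>\<zeta> \<tau> \<omega>\<bar> \<le> \<sigma> * sqrt (2 * ln (real T / p))}"
proof -
  interpret prob_space M by fact
  let ?c = "\<sigma> * sqrt (2 * ln (real T / p))"
  define bad where "bad \<tau> = {\<omega>\<in>space M. ?c < \<bar>\<zeta> \<tau> \<omega>\<bar>}" for \<tau>
  have bad_sets: "bad \<tau> \<in> sets M" if "\<tau> \<in> {1..T}" for \<tau>
  proof -
    have [measurable]: "\<zeta> \<tau> \<in> borel_measurable M"
      using distributed_measurable[OF normal[rule_format, OF that]] by simp
    show ?thesis unfolding bad_def by measurable
  qed
  have good: "{\<omega>\<in>space M. \<forall>\<tau>\<in>{1..T}. \<bar>\<zeta> \<tau> \<omega>\<bar> \<le> ?c} = space M - (\<Union>\<tau>\<in>{1..T}. bad \<tau>)"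
    by (auto simp: bad_def not_less)
  have bad_union: "(\<Union>\<tau>\<in>{1..T}. bad \<tau>) \<in> sets M" using bad_sets by blast
  then show "{\<omega>\<in>space M. \<forall>\<tau>\<in>{1..T}. \<bar>\<zeta> \<tau> \<omega>\<bar> \<le> ?c} \<in> sets M" unfolding good by blast
  have "measure M (\<Union>\<tau>\<in>{1..T}. bad \<tau>) \<le> (\<Sum>\<tau>\<in>{1..T}. measure M (bad \<tau>))"
    using bad_sets by (intro measure_UNION_le) auto
  also have "\<dots> \<le> (\<Sum>\<tau>\<in>{1..T}. p / real T)"
  proof (rule sum_mono)
    fix \<tau> assume \<tau>: "\<tau> \<in> {1..T}"
    then have "exp 1 \<le> 3 * real T" using exp_le by simp
    also have "\<dots> \<le> real T / p"
      using mult_left_mono[OF \<open>p \<le> 1 / 3\<close>, of "3 * real T"] \<open>0 < p\<close> by (simp add: le_divide_eq)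
    finally have "exp 1 \<le> real T / p" .
    from normal_abs_tail_sqrt_ln_le[OF \<open>prob_space M\<close> normal[rule_format, OF \<tau>] \<open>0 < \<sigma>\<close> this]
    show "measure M (bad \<tau>) \<le> p / real T" unfolding bad_def by simp
  qed
  also have "\<dots> \<le> p" using \<open>0 < p\<close> by simp
  finally show "1 - p \<le> measure M {\<omega>\<in>space M. \<forall>\<tau>\<in>{1..T}. \<bar>\<zeta> \<tau> \<omega>\<bar> \<le> ?c}"
    unfolding good using prob_compl[OF bad_union] by linarith
qed

lemma post_mean_noisy_observations_perturbation:
  assumes psd_1: "psd_kernel_on X k\<^sub>1" and psd_2: "psd_kernel_on X k\<^sub>2"
    and close: "\<forall>x\<in>X. \<forall>x'\<in>X. \<bar>k\<^sub>2 x x' - k\<^sub>1 x x'\<bar> \<le> e" and "e \<le> 1"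
    and bounded: "\<forall>x\<in>X. \<forall>x'\<in>X. k\<^sub>1 x x' \<le> K\<^sub>0"
    and queries: "\<forall>\<tau>\<in>{1..T}. xs \<tau> \<in> X" and "x \<in> X"
    and bounded_f: "\<forall>x\<in>X. \<bar>f x\<bar> \<le> B" and noise: "\<forall>\<tau>\<in>{1..T}. \<bar>z \<tau>\<bar> \<le> c" and "0 \<le> c"
    and "0 < \<sigma>" and "\<sigma>\<^sup>2 \<le> 1" and "n < t" and "t \<le> T"
  shows "\<bar>post_mean k\<^sub>1 \<sigma> xs (\<lambda>\<tau>. f (xs \<tau>) + z \<tau>) n x - post_mean k\<^sub>2 \<sigma> xs (\<lambda>\<tau>. f (xs \<tau>) + z \<tau>) n x\<bar>
           \<le> 2 * max 1 K\<^sub>0 * (real t ^ 2 * e / \<sigma> ^ 4) * (B + c)"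
proof (rule post_mean_kernel_perturbation[OF psd_1 psd_2 close \<open>e \<le> 1\<close> bounded])
  have observed: "Suc i \<in> {1..T}" if "i < n" for i using that \<open>n < t\<close> \<open>t \<le> T\<close> by simp
  then show "\<forall>i<n. xs (Suc i) \<in> X" using queries by blast
  show "\<forall>i<n. \<bar>f (xs (Suc i)) + z (Suc i)\<bar> \<le> B + c"
  proof (intro allI impI)
    fix i assume "i < n"
    then have "\<bar>f (xs (Suc i))\<bar> \<le> B" and "\<bar>z (Suc i)\<bar> \<le> c"
      using bounded_f queries noise observed by blast+
    then show "\<bar>f (xs (Suc i)) + z (Suc i)\<bar> \<le> B + c"
      by (meson abs_triangle_ineq add_mono order_trans)
  qed
  have "0 \<le> B" using bounded_f \<open>x \<in> X\<close> by (meson abs_ge_zero order_trans)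
  then show "0 \<le> B + c" using \<open>0 \<le> c\<close> by linarith
qed (use assms in simp_all)

theorem lemma10:
  fixes M :: "'w measure"
    and X :: "'a :: euclidean_space set"
    and f :: "'a \<Rightarrow> real"
    and B' \<sigma> \<delta> K\<^sub>0 \<epsilon> :: real
    and L T :: nat
    and k :: "'a \<Rightarrow> 'a \<Rightarrow> real"
    and grad :: "'a \<Rightarrow> 'p :: real_inner"
    and \<zeta> :: "nat \<Rightarrow> 'w \<Rightarrow> real"
    and xq :: "nat \<Rightarrow> 'w \<Rightarrow> 'a"
    and fb :: "nat \<Rightarrow> 'w \<Rightarrow> nat"
  assumes "prob_space M"
    and "finite X" and "X \<subseteq> cball 0 1"
    and "\<forall>x\<in>X. \<bar>f x\<bar> \<le> B'"
    and "0 < \<sigma>" and "\<sigma>\<^sup>2 \<le> 1"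
    and "0 < \<delta>" and "\<delta> < 1"
    and "prob_space.indep_vars M (\<lambda>_. borel) \<zeta> {1..T}"
    and "\<forall>\<tau>\<in>{1..T}. distributed M lborel (\<zeta> \<tau>) (normal_density 0 \<sigma>)"
    and "psd_kernel_on X k"
    and "\<forall>x\<in>X. \<forall>x'\<in>X. k x x' \<le> K\<^sub>0"
    and "\<forall>x\<in>X. \<forall>x'\<in>X. \<bar>inner (grad x) (grad x') - k x x'\<bar> \<le> (real L + 1) * \<epsilon>"
    and "(real L + 1) * \<epsilon> \<le> 1"
    and "\<forall>t\<in>{1..T}. \<forall>\<omega>\<in>space M. xq t \<omega> \<in> X"
    and "\<forall>t\<in>{1..T}. \<forall>\<omega>\<in>space M. fb t \<omega> \<le> t - 1"
  shows "\<exists>E\<in>sets M. measure M E \<ge> 1 - \<delta> / 4 \<and>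
           (\<forall>\<omega>\<in>E. \<forall>t\<in>{1..T}. \<forall>x\<in>X.
              \<bar>post_mean k \<sigma> (\<lambda>\<tau>. xq \<tau> \<omega>) (\<lambda>\<tau>. f (xq \<tau> \<omega>) + \<zeta> \<tau> \<omega>) (fb t \<omega>) x
               - post_mean (\<lambda>x x'. inner (grad x) (grad x')) \<sigma> (\<lambda>\<tau>. xq \<tau> \<omega>)
                   (\<lambda>\<tau>. f (xq \<tau> \<omega>) + \<zeta> \<tau> \<omega>) (fb t \<omega>) x\<bar>
              \<le> 2 * max 1 K\<^sub>0 * (real t ^ 2 * ((real L + 1) * \<epsilon>) / \<sigma> ^ 4)
                  * (B' + \<sigma> * sqrt (2 * ln (4 * real T / \<delta>))))"
proof -
  let ?c = "\<sigma> * sqrt (2 * ln (4 * real T / \<delta>))"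
  define E where "E = {\<omega>\<in>space M. \<forall>\<tau>\<in>{1..T}. \<bar>\<zeta> \<tau> \<omega>\<bar> \<le> ?c}"
  have "0 < \<delta> / 4" and "\<delta> / 4 \<le> 1 / 3" using assms(7,8) by simp_all
  note noise_bounded = normal_noise_bounded_whp[OF assms(1,10,5) this]
  have "real T / (\<delta> / 4) = 4 * real T / \<delta>" by simp
  note noise_bounded = noise_bounded[unfolded this, folded E_def]
  have "1 \<le> 4 * real T / \<delta>" if "t \<in> {1..T}" for t
    using that assms(7,8) by (simp add: le_divide_eq)
  then have "0 \<le> ?c" if "t \<in> {1..T}" for t using assms(5) ln_ge_zero that by simp
  moreover have "fb t \<omega> < t" if "t \<in> {1..T}" "\<omega> \<in> space M" for t \<omega>
    using assms(16) that by force
  ultimately have "\<bar>post_mean k \<sigma> (\<lambda>\<tau>. xq \<tau> \<omega>) (\<lambda>\<tau>. f (xq \<tau> \<omega>) + \<zeta> \<tau> \<omega>) (fb t \<omega>) x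
      - post_mean (\<lambda>x x'. inner (grad x) (grad x')) \<sigma> (\<lambda>\<tau>. xq \<tau> \<omega>)
          (\<lambda>\<tau>. f (xq \<tau> \<omega>) + \<zeta> \<tau> \<omega>) (fb t \<omega>) x\<bar>
      \<le> 2 * max 1 K\<^sub>0 * (real t ^ 2 * ((real L + 1) * \<epsilon>) / \<sigma> ^ 4) * (B' + ?c)"
    if "\<omega> \<in> E" "t \<in> {1..T}" "x \<in> X" for \<omega> t x
    using that assms(4-6,15) unfolding E_def
    by (intro post_mean_noisy_observations_perturbation[OF assms(11) psd_kernel_on_inner
          assms(13,14,12)]) auto
  then show ?thesis using noise_bounded by blast
qed

end
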